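(* Let $V$ be a simple vertex operator algebra and $G=\langle g\rangle$ a group of automorphisms of $V$ of prime order $p$. Let $1\le i\le p-1$, assume $V$ is $g^i$-rational, and let $M$ be an irreducible $g^i$-twisted $V$-module. Then $G_M=G$, and the eigenspaces on $M$ of an isomorphism $\phi(g):M\to M$ satisfying $\phi(g)Y_M(v,z)\phi(g)^{-1}=Y_M(gv,z)$ for all $v\in V$ are irreducible $V^G$-modules.
   Context: For $k\in G$, $M\circ k$ is $M$ with vertex operators $Y_{M\circ k}(v,z)=Y_M(kv,z)$, and $G_M=\{k\in G: M\circ k\cong M \text{ as } g^i\text{-twisted } V\text{-modules}\}$. $V^G$ is the fixed-point subalgebra; $V$ is $g^i$-rational if every admissible $g^i$-twisted $V$-module is a direct sum of irreducible ones. *)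

theory Defs
  imports Complex_Main "HOL-Computational_Algebra.Primes"
begin

text \<open>Vertex operators are encoded by their modes:  Y u n v  is  u_n v,  so that
  Y(u,z) v = sum_n (u_n v) z^(-n-1).\<close>

text \<open>Finite sum of a finitely supported family (all sums below have finite support
  by the truncation axioms).\<close>
definition fsum :: "(nat \<Rightarrow> 'a::comm_monoid_add) \<Rightarrow> 'a" where
  "fsum f = (\<Sum>i\<in>{i. f i \<noteq> 0}. f i)"

definition sgn_pow :: "int \<Rightarrow> complex" where
  "sgn_pow l = (if even l then 1 else -1)"

definition Lop :: "('v \<Rightarrow> int \<Rightarrow> 'v \<Rightarrow> 'v) \<Rightarrow> 'v \<Rightarrow> int \<Rightarrow> 'v \<Rightarrow> 'v" where
  "Lop Y om n = Y om (n + 1)"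

definition fin_dim :: "(complex \<Rightarrow> 'v::ab_group_add \<Rightarrow> 'v) \<Rightarrow> 'v set \<Rightarrow> bool" where
  "fin_dim s W \<longleftrightarrow> (\<exists>B. finite B \<and> W \<subseteq> module.span s B)"

text \<open>Vertex operator algebra (V, Y, 1, omega) of central charge c, in the sense of
  Frenkel--Lepowsky--Meurman, with the Jacobi identity in its equivalent mode form
  (Borcherds identity).\<close>
definition VOA :: "(complex \<Rightarrow> 'v::ab_group_add \<Rightarrow> 'v) \<Rightarrow> ('v \<Rightarrow> int \<Rightarrow> 'v \<Rightarrow> 'v)
    \<Rightarrow> 'v \<Rightarrow> 'v \<Rightarrow> complex \<Rightarrow> bool" where
  "VOA s Y vac om c \<longleftrightarrow>
     vector_space s \<and>
     (\<forall>n w. Vector_Spaces.linear s s (\<lambda>u. Y u n w)) \<and>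
     (\<forall>u n. Vector_Spaces.linear s s (Y u n)) \<and>
     (\<forall>u v. \<exists>N. \<forall>n\<ge>N. Y u n v = 0) \<and>
     (\<forall>n w. Y vac n w = (if n = -1 then w else 0)) \<and>
     (\<forall>u. Y u (-1) vac = u \<and> (\<forall>n\<ge>0. Y u n vac = 0)) \<and>
     (\<forall>u v w m n l.
        fsum (\<lambda>i. s (of_int m gchoose i) (Y (Y u (l + int i) v) (m + n - int i) w)) =
        fsum (\<lambda>i. s ((-1)^i * (of_int l gchoose i))
                    (Y u (m + l - int i) (Y v (n + int i) w)
                     - s (sgn_pow l) (Y v (l + n - int i) (Y u (m + int i) w))))) \<and>
     (\<forall>m n w. Lop Y om m (Lop Y om n w) - Lop Y om n (Lop Y om m w) =
        s (of_int (m - n)) (Lop Y om (m + n) w)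
        + (if m + n = 0 then s ((of_int m ^ 3 - of_int m) / 12 * c) w else 0)) \<and>
     (\<forall>u n w. Y (Lop Y om (-1) u) n w = s (- of_int n) (Y u (n - 1) w)) \<and>
     module.span s (\<Union>n::int. {v. Lop Y om 0 v = s (of_int n) v}) = UNIV \<and>
     (\<forall>n::int. fin_dim s {v. Lop Y om 0 v = s (of_int n) v}) \<and>
     (\<exists>N::int. \<forall>n<N. {v. Lop Y om 0 v = s (of_int n) v} = {0})"

definition simple_VOA :: "(complex \<Rightarrow> 'v::ab_group_add \<Rightarrow> 'v) \<Rightarrow> ('v \<Rightarrow> int \<Rightarrow> 'v \<Rightarrow> 'v)
    \<Rightarrow> bool" where
  "simple_VOA s Y \<longleftrightarrow>
     (\<forall>I. module.subspace s I \<and> (\<forall>u v n. v \<in> I \<longrightarrow> Y u n v \<in> I \<and> Y v n u \<in> I)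
        \<longrightarrow> I = {0} \<or> I = UNIV)"

definition VOA_aut :: "(complex \<Rightarrow> 'v::ab_group_add \<Rightarrow> 'v) \<Rightarrow> ('v \<Rightarrow> int \<Rightarrow> 'v \<Rightarrow> 'v)
    \<Rightarrow> 'v \<Rightarrow> ('v \<Rightarrow> 'v) \<Rightarrow> bool" where
  "VOA_aut s Y om g \<longleftrightarrow> Vector_Spaces.linear s s g \<and> bij g \<and>
     (\<forall>u n v. g (Y u n v) = Y (g u) n (g v)) \<and> g om = om"

definition tw_space :: "(complex \<Rightarrow> 'v \<Rightarrow> 'v) \<Rightarrow> ('v \<Rightarrow> 'v) \<Rightarrow> nat \<Rightarrow> int \<Rightarrow> 'v set" where
  "tw_space s h T r = {v. h v = s (cis (- 2 * pi * of_int r / of_nat T)) v}"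

text \<open>Weak h-twisted V-module (Dong--Li--Mason), h of order T; modes indexed by rationals:
  YM v n w = v_n w, with Y_M(v,z) = sum_(n in Q) v_n z^(-n-1).  The twisted Jacobi
  identity is stated in its equivalent mode (twisted Borcherds) form.\<close>
definition weak_tw_module :: "(complex \<Rightarrow> 'v::ab_group_add \<Rightarrow> 'v) \<Rightarrow> ('v \<Rightarrow> int \<Rightarrow> 'v \<Rightarrow> 'v)
    \<Rightarrow> 'v \<Rightarrow> ('v \<Rightarrow> 'v) \<Rightarrow> nat
    \<Rightarrow> (complex \<Rightarrow> 'm::ab_group_add \<Rightarrow> 'm) \<Rightarrow> ('v \<Rightarrow> rat \<Rightarrow> 'm \<Rightarrow> 'm) \<Rightarrow> bool" where
  "weak_tw_module s Y vac h T sM YM \<longleftrightarrow>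
     vector_space sM \<and>
     (\<forall>n w. Vector_Spaces.linear s sM (\<lambda>u. YM u n w)) \<and>
     (\<forall>u n. Vector_Spaces.linear sM sM (YM u n)) \<and>
     (\<forall>r u n. u \<in> tw_space s h T r \<longrightarrow> \<not> (\<exists>k::int. n = of_int r / of_nat T + of_int k)
        \<longrightarrow> (\<forall>w. YM u n w = 0)) \<and>
     (\<forall>u w. \<exists>N::rat. \<forall>n\<ge>N. YM u n w = 0) \<and>
     (\<forall>n w. YM vac n w = (if n = -1 then w else 0)) \<and>
     (\<forall>r u v w (m::rat) (n::rat) (l::int).
        u \<in> tw_space s h T r \<longrightarrow> (\<exists>k::int. m = of_int r / of_nat T + of_int k) \<longrightarrow>
        fsum (\<lambda>i. sM (of_rat (m gchoose i)) (YM (Y u (l + int i) v) (m + n - of_nat i) w)) =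
        fsum (\<lambda>i. sM ((-1)^i * (of_int l gchoose i))
                    (YM u (m + of_int l - of_nat i) (YM v (n + of_nat i) w)
                     - sM (sgn_pow l) (YM v (of_int l + n - of_nat i) (YM u (m + of_nat i) w)))))"

definition LM0 :: "'v \<Rightarrow> ('v \<Rightarrow> rat \<Rightarrow> 'm \<Rightarrow> 'm) \<Rightarrow> 'm \<Rightarrow> 'm" where
  "LM0 om YM = YM om 1"

definition tw_module :: "(complex \<Rightarrow> 'v::ab_group_add \<Rightarrow> 'v) \<Rightarrow> ('v \<Rightarrow> int \<Rightarrow> 'v \<Rightarrow> 'v)
    \<Rightarrow> 'v \<Rightarrow> 'v \<Rightarrow> ('v \<Rightarrow> 'v) \<Rightarrow> nat
    \<Rightarrow> (complex \<Rightarrow> 'm::ab_group_add \<Rightarrow> 'm) \<Rightarrow> ('v \<Rightarrow> rat \<Rightarrow> 'm \<Rightarrow> 'm) \<Rightarrow> bool" where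
  "tw_module s Y vac om h T sM YM \<longleftrightarrow>
     weak_tw_module s Y vac h T sM YM \<and>
     module.span sM (\<Union>lam. {w. LM0 om YM w = sM lam w}) = UNIV \<and>
     (\<forall>lam. fin_dim sM {w. LM0 om YM w = sM lam w}) \<and>
     (\<forall>lam. \<exists>N::int. \<forall>n<N. {w. LM0 om YM w = sM (lam + of_int n / of_nat T) w} = {0})"

definition irreducible_tw_module :: "(complex \<Rightarrow> 'v::ab_group_add \<Rightarrow> 'v) \<Rightarrow> ('v \<Rightarrow> int \<Rightarrow> 'v \<Rightarrow> 'v)
    \<Rightarrow> 'v \<Rightarrow> 'v \<Rightarrow> ('v \<Rightarrow> 'v) \<Rightarrow> nat
    \<Rightarrow> (complex \<Rightarrow> 'm::ab_group_add \<Rightarrow> 'm) \<Rightarrow> ('v \<Rightarrow> rat \<Rightarrow> 'm \<Rightarrow> 'm) \<Rightarrow> bool" where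
  "irreducible_tw_module s Y vac om h T sM YM \<longleftrightarrow>
     tw_module s Y vac om h T sM YM \<and> (UNIV :: 'm set) \<noteq> {0} \<and>
     (\<forall>W. module.subspace sM W \<and> (\<forall>u n. YM u n ` W \<subseteq> W) \<longrightarrow> W = {0} \<or> W = UNIV)"

definition admissible_tw_module :: "(complex \<Rightarrow> 'v::ab_group_add \<Rightarrow> 'v) \<Rightarrow> ('v \<Rightarrow> int \<Rightarrow> 'v \<Rightarrow> 'v)
    \<Rightarrow> 'v \<Rightarrow> 'v \<Rightarrow> ('v \<Rightarrow> 'v) \<Rightarrow> nat
    \<Rightarrow> (complex \<Rightarrow> 'm::ab_group_add \<Rightarrow> 'm) \<Rightarrow> ('v \<Rightarrow> rat \<Rightarrow> 'm \<Rightarrow> 'm) \<Rightarrow> (rat \<Rightarrow> 'm set)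
    \<Rightarrow> bool" where
  "admissible_tw_module s Y vac om h T sM YM grd \<longleftrightarrow>
     weak_tw_module s Y vac h T sM YM \<and>
     (\<forall>n. module.subspace sM (grd n)) \<and>
     (\<forall>n. \<not> (\<exists>k::nat. n = of_nat k / of_nat T) \<longrightarrow> grd n = {0}) \<and>
     module.span sM (\<Union>n. grd n) = UNIV \<and>
     (\<forall>F f. finite F \<and> (\<forall>n\<in>F. f n \<in> grd n) \<and> sum f F = 0 \<longrightarrow> (\<forall>n\<in>F. f n = 0)) \<and>
     (\<forall>u (k::int) m n. Lop Y om 0 u = s (of_int k) u \<longrightarrow>
        YM u m ` grd n \<subseteq> grd (of_int k - m - 1 + n))"

definition adm_submodule :: "(complex \<Rightarrow> 'm::ab_group_add \<Rightarrow> 'm) \<Rightarrow> ('v \<Rightarrow> rat \<Rightarrow> 'm \<Rightarrow> 'm)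
    \<Rightarrow> (rat \<Rightarrow> 'm set) \<Rightarrow> 'm set \<Rightarrow> bool" where
  "adm_submodule sM YM grd W \<longleftrightarrow> module.subspace sM W \<and> (\<forall>u n. YM u n ` W \<subseteq> W) \<and>
     W \<subseteq> module.span sM (\<Union>n. W \<inter> grd n)"

definition irr_adm_submodule :: "(complex \<Rightarrow> 'm::ab_group_add \<Rightarrow> 'm) \<Rightarrow> ('v \<Rightarrow> rat \<Rightarrow> 'm \<Rightarrow> 'm)
    \<Rightarrow> (rat \<Rightarrow> 'm set) \<Rightarrow> 'm set \<Rightarrow> bool" where
  "irr_adm_submodule sM YM grd W \<longleftrightarrow> adm_submodule sM YM grd W \<and> W \<noteq> {0} \<and>
     (\<forall>W'. W' \<subseteq> W \<and> adm_submodule sM YM grd W' \<longrightarrow> W' = {0} \<or> W' = W)"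

definition completely_reducible :: "(complex \<Rightarrow> 'm::ab_group_add \<Rightarrow> 'm) \<Rightarrow> ('v \<Rightarrow> rat \<Rightarrow> 'm \<Rightarrow> 'm)
    \<Rightarrow> (rat \<Rightarrow> 'm set) \<Rightarrow> bool" where
  "completely_reducible sM YM grd \<longleftrightarrow>
     (\<exists>\<W>. (\<forall>W\<in>\<W>. irr_adm_submodule sM YM grd W) \<and>
          module.span sM (\<Union>\<W>) = UNIV \<and>
          (\<forall>W\<in>\<W>. W \<inter> module.span sM (\<Union>(\<W> - {W})) = {0}))"

definition tw_rational :: "'w::ab_group_add itself \<Rightarrow> (complex \<Rightarrow> 'v::ab_group_add \<Rightarrow> 'v)
    \<Rightarrow> ('v \<Rightarrow> int \<Rightarrow> 'v \<Rightarrow> 'v) \<Rightarrow> 'v \<Rightarrow> 'v \<Rightarrow> ('v \<Rightarrow> 'v) \<Rightarrow> nat \<Rightarrow> bool" where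
  "tw_rational _ s Y vac om h T \<longleftrightarrow>
     (\<forall>(sM :: complex \<Rightarrow> 'w \<Rightarrow> 'w) YM grd.
        admissible_tw_module s Y vac om h T sM YM grd \<longrightarrow> completely_reducible sM YM grd)"

definition tw_iso :: "(complex \<Rightarrow> 'm::ab_group_add \<Rightarrow> 'm) \<Rightarrow> ('v \<Rightarrow> rat \<Rightarrow> 'm \<Rightarrow> 'm)
    \<Rightarrow> ('v \<Rightarrow> rat \<Rightarrow> 'm \<Rightarrow> 'm) \<Rightarrow> ('m \<Rightarrow> 'm) \<Rightarrow> bool" where
  "tw_iso sM YM1 YM2 f \<longleftrightarrow> Vector_Spaces.linear sM sM f \<and> bij f \<and>
     (\<forall>v n w. f (YM1 v n w) = YM2 v n (f w))"

definition compose_mod :: "('v \<Rightarrow> rat \<Rightarrow> 'm \<Rightarrow> 'm) \<Rightarrow> ('v \<Rightarrow> 'v) \<Rightarrow> 'v \<Rightarrow> rat \<Rightarrow> 'm \<Rightarrow> 'm" where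
  "compose_mod YM k = (\<lambda>v. YM (k v))"

definition stab_mod :: "(complex \<Rightarrow> 'm::ab_group_add \<Rightarrow> 'm) \<Rightarrow> ('v \<Rightarrow> rat \<Rightarrow> 'm \<Rightarrow> 'm)
    \<Rightarrow> ('v \<Rightarrow> 'v) set \<Rightarrow> ('v \<Rightarrow> 'v) set" where
  "stab_mod sM YM G = {k \<in> G. \<exists>f. tw_iso sM (compose_mod YM k) YM f}"

text \<open>A subspace W of M is an irreducible V^G-module (for the restricted vertex operators
  Y_M(v,z), v in V^G; these satisfy the module axioms automatically by restriction).\<close>
definition irr_fixed_submodule :: "(complex \<Rightarrow> 'm::ab_group_add \<Rightarrow> 'm) \<Rightarrow> ('v \<Rightarrow> rat \<Rightarrow> 'm \<Rightarrow> 'm)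
    \<Rightarrow> 'v set \<Rightarrow> 'm set \<Rightarrow> bool" where
  "irr_fixed_submodule sM YM VG W \<longleftrightarrow>
     module.subspace sM W \<and> W \<noteq> {0} \<and> (\<forall>u\<in>VG. \<forall>n. YM u n ` W \<subseteq> W) \<and>
     (\<forall>W'. W' \<subseteq> W \<and> module.subspace sM W' \<and> (\<forall>u\<in>VG. \<forall>n. YM u n ` W' \<subseteq> W')
        \<longrightarrow> W' = {0} \<or> W' = W)"

end

theory Submission
  imports Defs
begin

text \<open>
  Write h = g^i. For v in V with h v = e^(-2 pi i r/p) v and L(0) v = d v (such vectors span V),
  the only nonzero modes v_n on the h-twisted module M have n in r/p + Z, and v_n shifts
  L(0)-eigenvalues by d - n - 1, which lies in -r/p + Z. Hence the operator e^(-2 pi i L(0)),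
  defined on the L(0)-eigenvectors spanning M, satisfies e^(-2 pi i L(0)) (h v)_n = v_n e^(-2 pi i L(0)),
  i.e. it is an isomorphism from M o h to M. As i is prime to p, every element of G is a power of h,
  so G_M = G.

  For the eigenspace E of phi for the eigenvalue a, let W be a nonzero V^G-submodule of E and
  w in W nonzero. By associativity and irreducibility the vectors u_n w span M. The average Q of
  the operators (phi/a)^t, t < p, fixes E pointwise and sends u_n w to (u')_n w, where u' is the
  average of the g^t u and hence lies in V^G. Thus Q maps M into W, and E = Q E is contained in W.
\<close>

lemma sum_roots_of_unity_eq_0:
  assumes "0 < t" "t < q"
  shows "(\<Sum>r<q. cis (2 * pi * real r * real t / real q)) = 0"
proof -
  define z where "z = cis (2 * pi * real t / real q)"
  have "z \<noteq> 1"
  proof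
    assume "z = 1"
    then have "cos (2 * pi * real t / real q) = 1"
      unfolding z_def by (metis cis.sel(1) one_complex.sel(1))
    then obtain n :: int where "2 * pi * real t / real q = of_int n * (2 * pi)"
      by (auto simp: cos_one_2pi_int)
    then have "real t = of_int n * real q" using assms by (simp add: field_simps)
    then have "int t = n * int q" by (metis of_int_eq_iff of_int_mult of_int_of_nat_eq)
    moreover have "n * int q \<le> 0 \<or> int q \<le> n * int q"
      using mult_right_mono[of 1 n "int q"] by (cases "n \<le> 0") (auto simp: mult_nonpos_nonneg)
    ultimately show False using assms by linarith
  qed
  have "(\<Sum>r<q. cis (2 * pi * real r * real t / real q)) = (\<Sum>r<q. z ^ r)"
    unfolding z_def DeMoivre by (intro sum.cong refl arg_cong[where f=cis]) (simp add: field_simps)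
  also have "\<dots> = (z ^ q - 1) / (z - 1)" using \<open>z \<noteq> 1\<close> by (rule geometric_sum)
  also have "z ^ q = 1" unfolding z_def DeMoivre using assms by (simp add: cis_multiple_2pi)
  finally show ?thesis by simp
qed

lemma linear_funpow:
  assumes "Vector_Spaces.linear s s f"
  shows "Vector_Spaces.linear s s (f ^^ n)"
proof (induction n)
  case 0
  have "vector_space s" using assms by (simp add: Vector_Spaces.linear_iff)
  then show ?case using vector_space.linear_id by (simp add: id_def)
next
  case (Suc n)
  then show ?case unfolding funpow.simps(2) by (rule Vector_Spaces.linear_compose[OF _ assms])
qed

definition eigen_proj ::
    "(complex \<Rightarrow> 'a \<Rightarrow> 'a) \<Rightarrow> ('a \<Rightarrow> 'a) \<Rightarrow> nat \<Rightarrow> int \<Rightarrow> 'a \<Rightarrow> 'a::ab_group_add" where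
  "eigen_proj sc T q r v =
     sc (1 / of_nat q) (\<Sum>t<q. sc (cis (2 * pi * of_int r * of_nat t / of_nat q)) ((T ^^ t) v))"

lemma eigen_proj_0:
  assumes "vector_space sc"
  shows "eigen_proj sc T q 0 v = sc (1 / of_nat q) (\<Sum>t<q. (T ^^ t) v)"
proof -
  interpret vector_space sc by fact
  show ?thesis unfolding eigen_proj_def by simp
qed

lemma sum_eigen_proj:
  assumes "vector_space sc" "q > 0"
  shows "(\<Sum>r<q. eigen_proj sc T q (int r) v) = v"
proof -
  interpret vector_space sc by fact
  have "(\<Sum>r<q. eigen_proj sc T q (int r) v)
      = sc (1 / of_nat q) (\<Sum>t<q. sc (\<Sum>r<q. cis (2 * pi * real r * real t / real q)) ((T ^^ t) v))"
    unfolding eigen_proj_def scale_sum_right[symmetric] scale_sum_left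
    by (subst sum.swap) simp
  also have "(\<Sum>t<q. sc (\<Sum>r<q. cis (2 * pi * real r * real t / real q)) ((T ^^ t) v))
      = (\<Sum>t\<in>{0}. sc (\<Sum>r<q. cis (2 * pi * real r * real t / real q)) ((T ^^ t) v))"
    using assms(2) by (intro sum.mono_neutral_right) (auto simp: sum_roots_of_unity_eq_0)
  finally show ?thesis using assms(2) by simp
qed

lemma eigen_proj_fixed:
  assumes "vector_space sc" "T v = v" "q > 0"
  shows "eigen_proj sc T q 0 v = v"
proof -
  interpret vector_space sc by fact
  have "(T ^^ t) v = v" for t
    using assms(2) by (induction t) auto
  then show ?thesis
    using assms by (simp add: eigen_proj_0 sum_constant_scale)
qed

lemma eigen_proj_eigen:
  assumes "Vector_Spaces.linear sc sc T" "T ^^ q = id" "q > 0"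
  shows "T (eigen_proj sc T q r v) = sc (cis (- 2 * pi * of_int r / of_nat q)) (eigen_proj sc T q r v)"
proof -
  interpret vector_space sc using assms(1) by (simp add: Vector_Spaces.linear_iff)
  interpret vector_space_pair sc sc ..
  define F where "F t = sc (cis (2 * pi * of_int r * of_nat t / of_nat q)) ((T ^^ t) v)" for t
  have "F q = F 0"
    using assms by (simp add: F_def cis_multiple_2pi)
  then have shift: "(\<Sum>t<q. F (Suc t)) = (\<Sum>t<q. F t)"
    using sum.lessThan_Suc_shift[of F q] by (simp add: add.commute)
  have T_F: "T (F t) = sc (cis (- 2 * pi * of_int r / of_nat q)) (F (Suc t))" for t
  proof -
    have "cis (- 2 * pi * of_int r / of_nat q) * cis (2 * pi * of_int r * of_nat (Suc t) / of_nat q)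
        = cis (2 * pi * of_int r * of_nat t / of_nat q)"
      unfolding cis_mult using assms(3) by (intro arg_cong[where f=cis]) (simp add: field_simps)
    then show ?thesis
      by (simp add: F_def linear_scale[OF assms(1)] funpow_swap1)
  qed
  have "T (eigen_proj sc T q r v) = sc (1 / of_nat q) (\<Sum>t<q. T (F t))"
    unfolding eigen_proj_def F_def[symmetric] by (simp add: linear_scale[OF assms(1)] linear_sum[OF assms(1)])
  also have "\<dots> = sc (cis (- 2 * pi * of_int r / of_nat q)) (sc (1 / of_nat q) (\<Sum>t<q. F (Suc t)))"
    by (simp add: T_F scale_sum_right[symmetric] mult.commute)
  also have "\<dots> = sc (cis (- 2 * pi * of_int r / of_nat q)) (sc (1 / of_nat q) (\<Sum>t<q. F t))"
    by (simp only: shift)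
  also have "sc (1 / of_nat q) (\<Sum>t<q. F t) = eigen_proj sc T q r v"
    by (simp add: eigen_proj_def F_def)
  finally show ?thesis .
qed

lemma eigen_proj_intertwine:
  assumes "Vector_Spaces.linear s1 s2 F" "\<And>v. F (T v) = T' (F v)"
  shows "F (eigen_proj s1 T q r v) = eigen_proj s2 T' q r (F v)"
proof -
  interpret Vector_Spaces.linear s1 s2 F by fact
  have "F ((T ^^ t) v) = (T' ^^ t) (F v)" for t
    using assms(2) by (induction t) auto
  then show ?thesis
    unfolding eigen_proj_def by (simp only: scale sum)
qed

lemma linear_eigen_proj:
  assumes "Vector_Spaces.linear sc sc T"
  shows "Vector_Spaces.linear sc sc (eigen_proj sc T q r)"
proof -
  interpret vector_space sc using assms(1) by (simp add: Vector_Spaces.linear_iff)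
  interpret vector_space_pair sc sc ..
  show ?thesis
    unfolding eigen_proj_def
    by (rule linear_compose_scale_right, rule linear_compose_sum, intro ballI
        linear_compose_scale_right linear_funpow assms)
qed

lemma (in vector_space) representation_eigenbasis_eigenvalue:
  assumes L: "Vector_Spaces.linear scale scale L"
    and B: "independent B" "span B = UNIV" "\<And>b. b \<in> B \<Longrightarrow> L b = scale (ev b) b"
    and x: "L x = scale c x"
    and b: "representation B x b \<noteq> 0"
  shows "ev b = c"
proof -
  interpret vector_space_pair scale scale ..
  define R where "R = representation B x"
  define F where "F = {b. R b \<noteq> 0}"
  have F: "finite F" "F \<subseteq> B"
    unfolding F_def R_def using finite_representation representation_ne_zero by auto
  have x_eq: "x = (\<Sum>b\<in>F. scale (R b) b)"
    unfolding F_def R_def using sum_nonzero_representation_eq[OF B(1)] B(2) by simp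
  have "L x = (\<Sum>b\<in>F. scale (R b * ev b) b)"
    using F(2) B(3) by (subst x_eq) (auto simp: linear_sum[OF L] linear_scale[OF L] intro!: sum.cong)
  moreover have "scale c x = (\<Sum>b\<in>F. scale (c * R b) b)"
    by (subst x_eq) (simp add: scale_sum_right)
  ultimately have "(\<Sum>b\<in>F. scale (R b * ev b - c * R b) b) = 0"
    using x by (simp add: scale_left_diff_distrib sum_subtractf)
  then have "R b * ev b - c * R b = 0"
    using independentD[OF B(1) F, of "\<lambda>b. R b * ev b - c * R b" b] b unfolding F_def by (simp add: R_def)
  then have "R b * (ev b - c) = 0" by (simp add: algebra_simps)
  then show ?thesis using b unfolding R_def by simp
qed

lemma (in vector_space) eigen_function_exists:
  assumes L: "Vector_Spaces.linear scale scale L"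
    and eigen_span: "span (\<Union>c. {x. L x = scale c x}) = UNIV"
  obtains f where "Vector_Spaces.linear scale scale f"
    "\<And>c x. L x = scale c x \<Longrightarrow> f x = scale (\<psi> c) x"
proof -
  interpret vector_space_pair scale scale ..
  define E where "E = (\<Union>c. {x. L x = scale c x})"
  obtain B where B: "B \<subseteq> E" "independent B" "E \<subseteq> span B"
    using maximal_independent_subset by blast
  have span_B: "span B = UNIV"
    using B(3) eigen_span span_minimal[of E "span B"] unfolding E_def by auto
  define ev where "ev b = (SOME c. L b = scale c b)" for b
  have ev: "L b = scale (ev b) b" if "b \<in> B" for b
  proof -
    have "\<exists>c. L b = scale c b" using that B(1) unfolding E_def by blast
    then show ?thesis unfolding ev_def by (rule someI_ex)
  qed
  define f where "f = construct B (\<lambda>b. scale (\<psi> (ev b)) b)"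
  have f_lin: "Vector_Spaces.linear scale scale f"
    unfolding f_def by (rule linear_construct[OF B(2)])
  have "f x = scale (\<psi> c) x" if x: "L x = scale c x" for c x
  proof -
    define R where "R = representation B x"
    have x_eq: "x = (\<Sum>b | R b \<noteq> 0. scale (R b) b)"
      unfolding R_def using sum_nonzero_representation_eq[OF B(2)] span_B by simp
    have "f x = (\<Sum>b | R b \<noteq> 0. scale (R b) (f b))"
      by (subst x_eq) (simp add: linear_sum[OF f_lin] linear_scale[OF f_lin])
    also have "\<dots> = (\<Sum>b | R b \<noteq> 0. scale (\<psi> c) (scale (R b) b))"
      using representation_eigenbasis_eigenvalue[OF L B(2) span_B ev x] representation_ne_zero
      by (intro sum.cong) (auto simp: R_def f_def construct_basis[OF B(2)] mult.commute)
    also have "\<dots> = scale (\<psi> c) x"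
      by (simp only: scale_sum_right[symmetric] x_eq[symmetric])
    finally show ?thesis .
  qed
  with f_lin that show ?thesis by blast
qed

lemma (in vector_space) bij_eigen_function_exists:
  assumes L: "Vector_Spaces.linear scale scale L"
    and eigen_span: "span (\<Union>c. {x. L x = scale c x}) = UNIV"
    and nonzero: "\<And>c. \<psi> c \<noteq> 0"
  obtains f where "Vector_Spaces.linear scale scale f" "bij f"
    "\<And>c x. L x = scale c x \<Longrightarrow> f x = scale (\<psi> c) x"
proof -
  interpret vector_space_pair scale scale ..
  have left_inverse: "g' \<circ> g = id"
    if g: "Vector_Spaces.linear scale scale g" "Vector_Spaces.linear scale scale g'"
      and inv: "\<And>c x. L x = scale c x \<Longrightarrow> g' (g x) = x" for g g'
  proof
    fix x
    show "(g' \<circ> g) x = id x"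
      by (rule linear_eq_on[OF Vector_Spaces.linear_compose[OF g] linear_id, of x "\<Union>c. {x. L x = scale c x}"])
        (use eigen_span inv in auto)
  qed
  obtain f where f: "Vector_Spaces.linear scale scale f"
    "\<And>c x. L x = scale c x \<Longrightarrow> f x = scale (\<psi> c) x"
    using eigen_function_exists[OF L eigen_span, where \<psi> = \<psi>] by blast
  obtain f' where f': "Vector_Spaces.linear scale scale f'"
    "\<And>c x. L x = scale c x \<Longrightarrow> f' x = scale (inverse (\<psi> c)) x"
    using eigen_function_exists[OF L eigen_span, where \<psi> = "\<lambda>c. inverse (\<psi> c)"] by blast
  have "f' (f x) = x" "f (f' x) = x" if "L x = scale c x" for c x
    using nonzero by (simp_all add: f(2)[OF that] f'(2)[OF that] linear_scale[OF f(1)] linear_scale[OF f'(1)])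
  then have "f' \<circ> f = id" "f \<circ> f' = id"
    using left_inverse f(1) f'(1) by blast+
  then have "bij f" by (intro o_bij)
  with f that show ?thesis by blast
qed

lemma fsum_eq_sum_lessThan:
  assumes "\<And>i. i \<ge> B \<Longrightarrow> f i = 0"
  shows "fsum f = (\<Sum>i<B. f i)"
  unfolding fsum_def using assms by (intro sum.mono_neutral_left) (auto, meson not_le)

lemma (in module) fsum_mem_subspace: "subspace S \<Longrightarrow> (\<And>i. f i \<in> S) \<Longrightarrow> fsum f \<in> S"
  unfolding fsum_def by (intro subspace_sum) auto

locale twisted_module =
  fixes s :: "complex \<Rightarrow> 'v::ab_group_add \<Rightarrow> 'v"
    and Y :: "'v \<Rightarrow> int \<Rightarrow> 'v \<Rightarrow> 'v"
    and vac :: 'v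
    and h :: "'v \<Rightarrow> 'v" and T :: nat
    and sM :: "complex \<Rightarrow> 'm::ab_group_add \<Rightarrow> 'm"
    and YM :: "'v \<Rightarrow> rat \<Rightarrow> 'm \<Rightarrow> 'm"
  assumes weak_tw_module: "weak_tw_module s Y vac h T sM YM"
    and linear_h: "Vector_Spaces.linear s s h"
    and h_order: "h ^^ T = id"
    and T_pos: "T > 0"
begin

sublocale V: vector_space s
  using linear_h by (simp add: Vector_Spaces.linear_iff)
sublocale M: vector_space sM
  using weak_tw_module unfolding weak_tw_module_def by auto
sublocale VV: vector_space_pair s s ..
sublocale VM: vector_space_pair s sM ..
sublocale MM: vector_space_pair sM sM ..

lemma linear_YM_left: "Vector_Spaces.linear s sM (\<lambda>u. YM u n w)"
  and linear_YM_right: "Vector_Spaces.linear sM sM (YM u n)"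
  and YM_coset_zero: "u \<in> tw_space s h T r \<Longrightarrow> \<not> (\<exists>k::int. n = of_int r / of_nat T + of_int k) \<Longrightarrow> YM u n w = 0"
  and YM_truncation: "\<exists>N::rat. \<forall>n\<ge>N. YM u n w = 0"
  and YM_vacuum: "YM vac n w = (if n = -1 then w else 0)"
  and YM_Borcherds: "u \<in> tw_space s h T r \<Longrightarrow> (\<exists>k::int. m = of_int r / of_nat T + of_int k) \<Longrightarrow>
        fsum (\<lambda>i. sM (of_rat (m gchoose i)) (YM (Y u (l + int i) v) (m + n - of_nat i) w)) =
        fsum (\<lambda>i. sM ((-1)^i * (of_int l gchoose i))
                    (YM u (m + of_int l - of_nat i) (YM v (n + of_nat i) w)
                     - sM (sgn_pow l) (YM v (of_int l + n - of_nat i) (YM u (m + of_nat i) w))))"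
  using weak_tw_module unfolding weak_tw_module_def by blast+

lemmas YM_scale_left = VM.linear_scale[OF linear_YM_left]
  and YM_sum_left = VM.linear_sum[OF linear_YM_left]
  and YM_zero_left = VM.linear_0[OF linear_YM_left]
  and YM_scale_right = MM.linear_scale[OF linear_YM_right]
  and YM_zero_right = MM.linear_0[OF linear_YM_right]

lemma eigen_proj_mem_tw_space: "eigen_proj s h T r v \<in> tw_space s h T r"
  unfolding tw_space_def using eigen_proj_eigen[OF linear_h h_order T_pos] by simp

definition mode_span :: "'m \<Rightarrow> 'm set" where
  "mode_span w = M.span {YM u n w | u n. True}"

lemma subspace_mode_span: "M.subspace (mode_span w)"
  unfolding mode_span_def by (rule M.subspace_span)

lemma YM_mem_mode_span: "YM u n w \<in> mode_span w"
  unfolding mode_span_def by (intro M.span_base) auto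

lemma mem_mode_span_self: "w \<in> mode_span w"
  using YM_mem_mode_span[of vac "-1" w] by (simp add: YM_vacuum)

lemma twisted_associativity:
  assumes "v \<in> tw_space s h T r" "\<exists>k::int. m = of_int r / of_nat T + of_int k"
    and "\<And>i::nat. YM v (m + of_nat i) w = 0"
  shows "fsum (\<lambda>i. sM (of_rat (m gchoose i)) (YM (Y v (l + int i) u) (m + n - of_nat i) w)) =
    fsum (\<lambda>i. sM ((-1)^i * (of_int l gchoose i)) (YM v (m + of_int l - of_nat i) (YM u (n + of_nat i) w)))"
  using YM_Borcherds[OF assms(1,2), of l u n w] by (simp add: assms(3) YM_zero_right)

text \<open>
  Associativity: for m = K + t so large that the v_(m+j) w vanish, the twisted Borcherds identity
  with l = -t expresses v_K u_N w through modes of the vectors v_j u applied to w and the terms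
  v_(K-i) u_(N+i) w with i > 0.
\<close>
lemma YM_YM_mem_mode_span_of_higher:
  assumes v: "v \<in> tw_space s h T r" and K: "K = of_int r / of_nat T + of_int k"
    and higher: "\<And>i. YM v (K - of_nat (Suc i)) (YM u (N + of_nat (Suc i)) w) \<in> mode_span w"
  shows "YM v K (YM u N w) \<in> mode_span w"
proof -
  obtain Nu where Nu: "\<And>n. n \<ge> Nu \<Longrightarrow> YM u n w = 0" using YM_truncation by blast
  obtain Nv where Nv: "\<And>n. n \<ge> Nv \<Longrightarrow> YM v n w = 0" using YM_truncation by blast
  define t where "t = nat \<lceil>Nv - K\<rceil>"
  define B where "B = nat \<lceil>Nu - N\<rceil>"
  define R where "R i = sM ((- 1) ^ i * (of_int (- int t) gchoose i))
    (YM v (K - of_nat i) (YM u (N + of_nat i) w))" for i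
  have coset: "\<exists>k::int. K + of_nat t = of_int r / of_nat T + of_int k"
    using K by (intro exI[of _ "k + int t"]) simp
  have vanish: "YM v (K + of_nat t + of_nat i) w = 0" for i
    by (rule Nv) (simp add: t_def; linarith)
  have "fsum (\<lambda>i. sM (of_rat ((K + of_nat t) gchoose i))
      (YM (Y v (- int t + int i) u) (K + of_nat t + N - of_nat i) w)) = fsum R"
    using twisted_associativity[OF v coset vanish, of "- int t" u N] by (simp add: R_def[abs_def])
  moreover have "fsum (\<lambda>i. sM (of_rat ((K + of_nat t) gchoose i))
      (YM (Y v (- int t + int i) u) (K + of_nat t + N - of_nat i) w)) \<in> mode_span w"
    by (intro M.fsum_mem_subspace subspace_mode_span M.subspace_scale YM_mem_mode_span)
  ultimately have "fsum R \<in> mode_span w" by simp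
  moreover have "fsum R = R 0 + (\<Sum>i<B. R (Suc i))"
  proof -
    have "YM u (N + of_nat i) w = 0" if "i \<ge> Suc B" for i
      by (rule Nu) (use that in \<open>simp add: B_def; linarith\<close>)
    then have "fsum R = (\<Sum>i<Suc B. R i)"
      by (intro fsum_eq_sum_lessThan) (simp add: R_def YM_zero_right)
    then show ?thesis by (simp only: sum.lessThan_Suc_shift)
  qed
  moreover have "(\<Sum>i<B. R (Suc i)) \<in> mode_span w"
    unfolding R_def by (intro M.subspace_sum[OF subspace_mode_span] M.subspace_scale[OF subspace_mode_span] higher)
  ultimately have "fsum R - (\<Sum>i<B. R (Suc i)) \<in> mode_span w"
    by (intro M.subspace_diff[OF subspace_mode_span])
  with \<open>fsum R = R 0 + (\<Sum>i<B. R (Suc i))\<close> show ?thesis by (simp add: R_def)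
qed

lemma YM_YM_mem_mode_span_tw:
  assumes v: "v \<in> tw_space s h T r"
  shows "YM v K (YM u N w) \<in> mode_span w"
proof -
  obtain Nu where Nu: "\<And>n. n \<ge> Nu \<Longrightarrow> YM u n w = 0" using YM_truncation by blast
  show ?thesis
  proof (induction "nat \<lceil>Nu - N\<rceil>" arbitrary: N K rule: less_induct)
    case less
    show ?case
    proof (cases "N \<ge> Nu")
      case True
      then show ?thesis using Nu M.subspace_0[OF subspace_mode_span] by (simp add: YM_zero_right)
    next
      case False
      show ?thesis
      proof (cases "\<exists>k::int. K = of_int r / of_nat T + of_int k")
        case True
        then obtain k where "K = of_int r / of_nat T + of_int k" ..
        then show ?thesis
        proof (rule YM_YM_mem_mode_span_of_higher[OF v])
          show "YM v (K - of_nat (Suc i)) (YM u (N + of_nat (Suc i)) w) \<in> mode_span w" for i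
            by (rule less) (use \<open>\<not> N \<ge> Nu\<close> in linarith)
        qed
      next
        case False
        then show ?thesis using YM_coset_zero[OF v] M.subspace_0[OF subspace_mode_span] by simp
      qed
    qed
  qed
qed

lemma YM_YM_mem_mode_span: "YM v K (YM u N w) \<in> mode_span w"
proof -
  have "YM v K (YM u N w) = (\<Sum>r<T. YM (eigen_proj s h T (int r) v) K (YM u N w))"
    using sum_eigen_proj[OF V.vector_space_axioms T_pos, of h v] by (metis YM_sum_left)
  also have "\<dots> \<in> mode_span w"
    using YM_YM_mem_mode_span_tw[OF eigen_proj_mem_tw_space]
    by (intro M.subspace_sum[OF subspace_mode_span])
  finally show ?thesis .
qed

lemma YM_mem_mode_span_closed: "x \<in> mode_span w \<Longrightarrow> YM v K x \<in> mode_span w"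
  unfolding mode_span_def
proof (induction rule: M.span_induct)
  case base
  show ?case
    using MM.linear_subspace_vimage[OF linear_YM_right M.subspace_span] by (simp add: vimage_def)
next
  case (step x)
  then show ?case using YM_YM_mem_mode_span unfolding mode_span_def by blast
qed

lemma mode_span_eq_UNIV:
  assumes irreducible: "\<forall>W. M.subspace W \<and> (\<forall>u n. YM u n ` W \<subseteq> W) \<longrightarrow> W = {0} \<or> W = UNIV"
    and "w \<noteq> 0"
  shows "mode_span w = UNIV"
  using irreducible subspace_mode_span YM_mem_mode_span_closed mem_mode_span_self assms(2) by blast

lemma eigenspace_subset_fixed_point_submodule:
  assumes irreducible: "\<forall>W. M.subspace W \<and> (\<forall>u n. YM u n ` W \<subseteq> W) \<longrightarrow> W = {0} \<or> W = UNIV"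
    and g: "Vector_Spaces.linear s s g" "g ^^ q = id" "q > 0"
    and \<phi>: "Vector_Spaces.linear sM sM \<phi>" "\<forall>v n w. \<phi> (YM v n w) = YM (g v) n (\<phi> w)"
    and a: "a \<noteq> 0"
    and W: "M.subspace W" "W \<subseteq> {x. \<phi> x = sM a x}" "\<forall>u\<in>{v. g v = v}. \<forall>n. YM u n ` W \<subseteq> W"
    and w: "w \<in> W" "w \<noteq> 0"
  shows "{x. \<phi> x = sM a x} \<subseteq> W"
proof -
  define \<psi> where "\<psi> x = sM (inverse a) (\<phi> x)" for x
  define Q where "Q = eigen_proj sM \<psi> q 0"
  have \<psi>_linear: "Vector_Spaces.linear sM sM \<psi>"
    unfolding \<psi>_def by (rule MM.linear_compose_scale_right[OF \<phi>(1)])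
  have Q_generator: "Q (YM u n w) \<in> W" for u n
  proof -
    have "YM (g v) n w = \<psi> (YM v n w)" for v
      using \<phi>(2) W(2) w(1) a by (auto simp: \<psi>_def YM_scale_right)
    then have "Q (YM u n w) = YM (eigen_proj s g q 0 u) n w"
      unfolding Q_def by (rule eigen_proj_intertwine[OF linear_YM_left, symmetric])
    moreover have "g (eigen_proj s g q 0 u) = eigen_proj s g q 0 u"
      using eigen_proj_eigen[OF g] by simp
    ultimately show ?thesis using W(3) w(1) by auto
  qed
  have Q_in_W: "Q x \<in> W" for x
  proof -
    have "x \<in> mode_span w" using mode_span_eq_UNIV[OF irreducible w(2)] by simp
    then show ?thesis
      unfolding mode_span_def
    proof (induction rule: M.span_induct)
      case base
      show ?case
        using MM.linear_subspace_vimage[OF linear_eigen_proj[OF \<psi>_linear] W(1)]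
        by (simp add: Q_def vimage_def)
    next
      case (step x)
      then show ?case using Q_generator by auto
    qed
  qed
  have Q_fixed: "Q x = x" if "\<phi> x = sM a x" for x
    unfolding Q_def using that a by (intro eigen_proj_fixed[OF M.vector_space_axioms _ g(3)]) (simp add: \<psi>_def)
  show ?thesis
  proof
    fix x assume "x \<in> {x. \<phi> x = sM a x}"
    then have "x = Q x" using Q_fixed by simp
    also have "\<dots> \<in> W" by (rule Q_in_W)
    finally show "x \<in> W" .
  qed
qed

lemma eigenspace_irr_fixed_submodule:
  assumes irreducible: "\<forall>W. M.subspace W \<and> (\<forall>u n. YM u n ` W \<subseteq> W) \<longrightarrow> W = {0} \<or> W = UNIV"
    and g: "Vector_Spaces.linear s s g" "g ^^ q = id" "q > 0"
    and \<phi>: "Vector_Spaces.linear sM sM \<phi>" "inj \<phi>" "\<forall>v n w. \<phi> (YM v n w) = YM (g v) n (\<phi> w)"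
    and nonzero: "{x. \<phi> x = sM a x} \<noteq> {0}"
  shows "irr_fixed_submodule sM YM {v. g v = v} {x. \<phi> x = sM a x}"
proof -
  have "a \<noteq> 0"
  proof
    assume "a = 0"
    then have "{x. \<phi> x = sM a x} = {0}"
      using \<phi>(2) MM.linear_inj_iff_eq_0[OF \<phi>(1)] MM.linear_0[OF \<phi>(1)] by auto
    with nonzero show False ..
  qed
  have subspace: "M.subspace {x. \<phi> x = sM a x}"
    by (rule M.subspaceI)
      (auto simp: MM.linear_0[OF \<phi>(1)] MM.linear_add[OF \<phi>(1)] MM.linear_scale[OF \<phi>(1)]
        M.scale_right_distrib)
  have invariant: "YM u n ` {x. \<phi> x = sM a x} \<subseteq> {x. \<phi> x = sM a x}" if "g u = u" for u n
    using \<phi>(3) that by (auto simp: YM_scale_right)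
  have minimal: "W = {0} \<or> W = {x. \<phi> x = sM a x}"
    if W: "W \<subseteq> {x. \<phi> x = sM a x}" "M.subspace W" "\<forall>u\<in>{v. g v = v}. \<forall>n. YM u n ` W \<subseteq> W" for W
  proof (cases "W = {0}")
    case False
    then obtain w where "w \<in> W" "w \<noteq> 0" using M.subspace_0[OF W(2)] by blast
    then show ?thesis
      using eigenspace_subset_fixed_point_submodule[OF irreducible g \<phi>(1,3) \<open>a \<noteq> 0\<close> W(2,1,3)] W(1)
      by blast
  qed simp
  show ?thesis
    unfolding irr_fixed_submodule_def using subspace nonzero invariant minimal by auto
qed

end

definition twist_phase :: "complex \<Rightarrow> complex" where
  "twist_phase z = exp (- 2 * of_real pi * \<i> * z)"

lemma twist_phase_add: "twist_phase (a + b) = twist_phase a * twist_phase b"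
  unfolding twist_phase_def by (simp add: distrib_left exp_add[symmetric])

lemma twist_phase_of_real: "twist_phase (of_real x) = cis (- 2 * pi * x)"
  unfolding twist_phase_def cis_conv_exp by (simp add: algebra_simps)

lemma twist_phase_of_int: "twist_phase (of_int j) = 1"
  using twist_phase_of_real[of "of_int j"] cis_multiple_2pi[of "of_int (- j)"] by simp

lemma twist_phase_nonzero: "twist_phase z \<noteq> 0"
  unfolding twist_phase_def by simp

lemma cis_mult_twist_phase:
  "cis (- 2 * pi * of_int r / of_nat T)
    * twist_phase (\<mu> + of_int d - of_rat (of_int r / of_nat T + of_int k) - 1) = twist_phase \<mu>"
proof -
  have "\<mu> + of_int d - of_rat (of_int r / of_nat T + of_int k) - 1
      = \<mu> + of_real (- (of_int r / of_nat T)) + of_int (d - k - 1)"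
    by (simp add: of_rat_add of_rat_divide)
  then have "twist_phase (\<mu> + of_int d - of_rat (of_int r / of_nat T + of_int k) - 1)
      = twist_phase \<mu> * twist_phase (of_real (- (of_int r / of_nat T))) * twist_phase (of_int (d - k - 1))"
    by (simp only: twist_phase_add)
  also have "\<dots> = twist_phase \<mu> * cis (2 * pi * of_int r / of_nat T)"
    by (simp only: twist_phase_of_real twist_phase_of_int) simp
  finally show ?thesis
    by (simp add: mult.left_commute[of "cis _"] cis_mult)
qed

locale VOA_twisted_module =
  fixes s :: "complex \<Rightarrow> 'v::ab_group_add \<Rightarrow> 'v"
    and Y :: "'v \<Rightarrow> int \<Rightarrow> 'v \<Rightarrow> 'v"
    and vac om :: 'v and c :: complex
    and h :: "'v \<Rightarrow> 'v" and T :: nat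
    and sM :: "complex \<Rightarrow> 'm::ab_group_add \<Rightarrow> 'm"
    and YM :: "'v \<Rightarrow> rat \<Rightarrow> 'm \<Rightarrow> 'm"
  assumes VOA: "VOA s Y vac om c"
    and aut: "VOA_aut s Y om h"
    and h_order: "h ^^ T = id" and T_pos: "T > 0"
    and weak_tw_module: "weak_tw_module s Y vac h T sM YM"
begin

sublocale twisted_module s Y vac h T sM YM
  unfolding twisted_module_def using aut h_order T_pos weak_tw_module by (simp add: VOA_aut_def)

lemma Y_creation: "Y u (-1) vac = u" "n \<ge> 0 \<Longrightarrow> Y u n vac = 0"
  and Y_derivation: "Y (Lop Y om (-1) u) n w = s (- of_int n) (Y u (n - 1) w)"
  and span_L0_eigenvectors: "V.span (\<Union>n::int. {v. Lop Y om 0 v = s (of_int n) v}) = UNIV"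
  and linear_Y_right: "Vector_Spaces.linear s s (Y u n)"
  using VOA unfolding VOA_def by auto

lemma h_Y: "h (Y u n v) = Y (h u) n (h v)" and h_omega: "h om = om"
  using aut unfolding VOA_aut_def by auto

lemma omega_0_eq: "Y om 0 u = Y u (-2) vac"
  using Y_derivation[of u "-1" vac] by (simp add: Lop_def Y_creation)

lemma YM_translation:
  assumes "u \<in> tw_space s h T r" "\<exists>k::int. m = of_int r / of_nat T + of_int k"
  shows "YM (Y u (-2) vac) m w = sM (- of_rat m) (YM u (m - 1) w)"
proof -
  have "fsum (\<lambda>i. sM (of_rat (m gchoose i)) (YM (Y u (-2 + int i) vac) (m + 0 - of_nat i) w))
      = (\<Sum>i<2. sM (of_rat (m gchoose i)) (YM (Y u (-2 + int i) vac) (m + 0 - of_nat i) w))"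
    by (rule fsum_eq_sum_lessThan) (simp add: Y_creation YM_zero_left)
  also have "\<dots> = YM (Y u (-2) vac) m w + sM (of_rat m) (YM u (m - 1) w)"
    by (simp add: numeral_2_eq_2 Y_creation)
  finally have "YM (Y u (-2) vac) m w + sM (of_rat m) (YM u (m - 1) w) = 0"
    using YM_Borcherds[OF assms, of "-2" vac 0 w] by (simp add: YM_vacuum YM_zero_right fsum_def)
  then show ?thesis by (simp add: eq_neg_iff_add_eq_0[symmetric])
qed

lemma YM_omega_commutator:
  "YM om 1 (YM u n w) - YM u n (YM om 1 w) = YM (Y om 0 u) (n + 1) w + YM (Y om 1 u) n w"
proof -
  have om: "om \<in> tw_space s h T 0"
    unfolding tw_space_def by (simp add: h_omega)
  have "(1::rat) gchoose i = 0" if "i \<ge> 2" for i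
  proof -
    have "(1::rat) gchoose i = of_nat (1 choose i)" by (simp add: binomial_gbinomial)
    then show ?thesis using that by simp
  qed
  then have "fsum (\<lambda>i. sM (of_rat (1 gchoose i)) (YM (Y om (0 + int i) u) (1 + n - of_nat i) w))
      = (\<Sum>i<2. sM (of_rat (1 gchoose i)) (YM (Y om (0 + int i) u) (1 + n - of_nat i) w))"
    by (intro fsum_eq_sum_lessThan) simp
  moreover have "fsum (\<lambda>i. sM ((-1)^i * (of_int 0 gchoose i))
        (YM om (1 + of_int 0 - of_nat i) (YM u (n + of_nat i) w)
         - sM (sgn_pow 0) (YM u (of_int 0 + n - of_nat i) (YM om (1 + of_nat i) w))))
      = (\<Sum>i<1. sM ((-1)^i * (of_int 0 gchoose i))
        (YM om (1 + of_int 0 - of_nat i) (YM u (n + of_nat i) w)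
         - sM (sgn_pow 0) (YM u (of_int 0 + n - of_nat i) (YM om (1 + of_nat i) w))))"
    by (intro fsum_eq_sum_lessThan) (simp add: gbinomial_0_left)
  ultimately show ?thesis
    using YM_Borcherds[OF om, of 1 0 u n w]
    by (simp add: numeral_2_eq_2 sgn_pow_def add.commute)
qed

lemma YM_L0_eigenvector:
  assumes u: "u \<in> tw_space s h T r" "Y om 1 u = s d u"
    and n: "\<exists>k::int. n = of_int r / of_nat T + of_int k"
    and w: "YM om 1 w = sM \<mu> w"
  shows "YM om 1 (YM u n w) = sM (\<mu> + d - of_rat n - 1) (YM u n w)"
proof -
  have "\<exists>k::int. n + 1 = of_int r / of_nat T + of_int k"
    using n by (metis add.assoc of_int_1 of_int_add)
  then have "YM (Y om 0 u) (n + 1) w = sM (- of_rat (n + 1)) (YM u n w)"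
    unfolding omega_0_eq using YM_translation[OF u(1)] by simp
  then have "YM om 1 (YM u n w)
      = YM u n (YM om 1 w) + (sM (- of_rat (n + 1)) (YM u n w) + sM d (YM u n w))"
    using YM_omega_commutator[of u n w] u(2) by (simp add: YM_scale_left diff_eq_eq)
  also have "\<dots> = sM \<mu> (YM u n w) + sM (- of_rat (n + 1)) (YM u n w) + sM d (YM u n w)"
    by (simp only: w YM_scale_right add.assoc)
  also have "\<dots> = sM (\<mu> + - of_rat (n + 1) + d) (YM u n w)"
    by (simp only: M.scale_left_distrib)
  also have "\<mu> + - of_rat (n + 1) + d = \<mu> + d - of_rat n - 1"
    by (simp add: of_rat_add)
  finally show ?thesis .
qed

definition homogeneous_eigenvectors :: "'v set" where
  "homogeneous_eigenvectors = {v. \<exists>r d. v \<in> tw_space s h T r \<and> Y om 1 v = s (of_int d) v}"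

lemma span_homogeneous_eigenvectors: "V.span homogeneous_eigenvectors = UNIV"
proof -
  have "v \<in> V.span homogeneous_eigenvectors" if "Y om 1 v = s (of_int d) v" for v d
  proof -
    have "Y om 1 (eigen_proj s h T r v) = s (of_int d) (eigen_proj s h T r v)" for r
      using eigen_proj_intertwine[OF linear_Y_right, where T = h and T' = h and q = T] h_Y h_omega that
        VV.linear_scale[OF linear_eigen_proj[OF linear_h]] by simp
    then have "eigen_proj s h T r v \<in> homogeneous_eigenvectors" for r
      unfolding homogeneous_eigenvectors_def using eigen_proj_mem_tw_space by blast
    then have "(\<Sum>r<T. eigen_proj s h T (int r) v) \<in> V.span homogeneous_eigenvectors"
      by (intro V.span_sum V.span_base)
    then show ?thesis using sum_eigen_proj[OF V.vector_space_axioms T_pos] by simp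
  qed
  then have "(\<Union>n::int. {v. Lop Y om 0 v = s (of_int n) v}) \<subseteq> V.span homogeneous_eigenvectors"
    by (auto simp: Lop_def)
  then show ?thesis
    using span_L0_eigenvectors V.span_minimal[OF _ V.subspace_span] by blast
qed

lemma twist_phase_intertwines_homogeneous:
  assumes f: "Vector_Spaces.linear sM sM f"
      "\<And>\<mu> x. YM om 1 x = sM \<mu> x \<Longrightarrow> f x = sM (twist_phase \<mu>) x"
    and v: "v \<in> homogeneous_eigenvectors"
    and w: "YM om 1 w = sM \<mu> w"
  shows "f (YM (h v) n w) = YM v n (f w)"
proof -
  obtain r d where vr: "v \<in> tw_space s h T r" and vd: "Y om 1 v = s (of_int d) v"
    using v unfolding homogeneous_eigenvectors_def by blast
  have hv: "h v = s (cis (- 2 * pi * of_int r / of_nat T)) v"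
    using vr unfolding tw_space_def by simp
  show ?thesis
  proof (cases "\<exists>k::int. n = of_int r / of_nat T + of_int k")
    case False
    then show ?thesis
      using YM_coset_zero[OF vr False] by (simp add: hv YM_scale_left MM.linear_0[OF f(1)])
  next
    case True
    then obtain k :: int where k: "n = of_int r / of_nat T + of_int k" by blast
    have "f (YM v n w) = sM (twist_phase (\<mu> + of_int d - of_rat n - 1)) (YM v n w)"
      by (rule f(2)) (rule YM_L0_eigenvector[OF vr vd True w])
    then have "f (YM (h v) n w)
        = sM (cis (- 2 * pi * of_int r / of_nat T) * twist_phase (\<mu> + of_int d - of_rat n - 1)) (YM v n w)"
      by (simp add: hv YM_scale_left MM.linear_scale[OF f(1)])
    also have "\<dots> = sM (twist_phase \<mu>) (YM v n w)"
      unfolding k cis_mult_twist_phase ..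
    also have "\<dots> = YM v n (f w)"
      by (simp add: f(2)[OF w] YM_scale_right)
    finally show ?thesis .
  qed
qed

lemma tw_iso_compose_mod_twist:
  assumes "M.span (\<Union>\<mu>. {w. LM0 om YM w = sM \<mu> w}) = UNIV"
  shows "\<exists>f. tw_iso sM (compose_mod YM h) YM f"
proof -
  obtain f where f: "Vector_Spaces.linear sM sM f" "bij f"
      "\<And>\<mu> x. YM om 1 x = sM \<mu> x \<Longrightarrow> f x = sM (twist_phase \<mu>) x"
    using M.bij_eigen_function_exists[where \<psi> = twist_phase,
        OF linear_YM_right assms[unfolded LM0_def] twist_phase_nonzero]
    by blast
  have on_eigenvectors: "f (YM (h v) n w) = YM v n (f w)" if w: "YM om 1 w = sM \<mu> w" for v n w \<mu>
  proof (rule VM.linear_eq_on[where f = "\<lambda>v. f (YM (h v) n w)"])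
    show "Vector_Spaces.linear s sM (\<lambda>v. f (YM (h v) n w))"
      using Vector_Spaces.linear_compose[OF Vector_Spaces.linear_compose[OF linear_h linear_YM_left] f(1)]
      by (simp add: comp_def)
    show "Vector_Spaces.linear s sM (\<lambda>v. YM v n (f w))"
      by (rule linear_YM_left)
    show "v \<in> V.span homogeneous_eigenvectors"
      using span_homogeneous_eigenvectors by simp
    show "f (YM (h b) n w) = YM b n (f w)" if "b \<in> homogeneous_eigenvectors" for b
      using twist_phase_intertwines_homogeneous[OF f(1,3) that w] .
  qed
  have "f (YM (h v) n w) = YM v n (f w)" for v n w
  proof (rule MM.linear_eq_on[where f = "\<lambda>w. f (YM (h v) n w)"])
    show "Vector_Spaces.linear sM sM (\<lambda>w. f (YM (h v) n w))"
      using Vector_Spaces.linear_compose[OF linear_YM_right f(1)] by (simp add: comp_def)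
    show "Vector_Spaces.linear sM sM (\<lambda>w. YM v n (f w))"
      using Vector_Spaces.linear_compose[OF f(1) linear_YM_right] by (simp add: comp_def)
    show "w \<in> M.span (\<Union>\<mu>. {w. YM om 1 w = sM \<mu> w})"
      using assms by (simp add: LM0_def)
  qed (use on_eigenvectors in blast)
  then show ?thesis
    unfolding tw_iso_def compose_mod_def using f(1,2) by blast
qed

end

lemma VOA_aut_funpow:
  assumes "VOA_aut s Y om g"
  shows "VOA_aut s Y om (g ^^ n)"
proof -
  have g: "Vector_Spaces.linear s s g" "bij g" "\<And>u m v. g (Y u m v) = Y (g u) m (g v)" "g om = om"
    using assms unfolding VOA_aut_def by auto
  have "(g ^^ n) (Y u m v) = Y ((g ^^ n) u) m ((g ^^ n) v)" for u m v
    using g(3) by (induction n) auto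
  moreover have "(g ^^ n) om = om"
    using g(4) by (induction n) auto
  ultimately show ?thesis
    unfolding VOA_aut_def using linear_funpow[OF g(1)] bij_betw_funpow[OF g(2)] by blast
qed

lemma tw_iso_funpow:
  assumes "tw_iso sM (compose_mod YM k) YM f"
  shows "tw_iso sM (compose_mod YM (k ^^ n)) YM (f ^^ n)"
proof -
  have f: "Vector_Spaces.linear sM sM f" "bij f" "\<And>v m w. f (YM (k v) m w) = YM v m (f w)"
    using assms unfolding tw_iso_def compose_mod_def by auto
  have "(f ^^ n) (YM ((k ^^ n) v) m w) = YM v m ((f ^^ n) w)" for v m w
  proof (induction n arbitrary: v)
    case (Suc n)
    have "(f ^^ Suc n) (YM ((k ^^ Suc n) v) m w) = f ((f ^^ n) (YM ((k ^^ n) (k v)) m w))"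
      by (simp add: funpow_swap1)
    also have "\<dots> = YM v m ((f ^^ Suc n) w)"
      by (simp add: Suc f(3))
    finally show ?case .
  qed simp
  then show ?thesis
    unfolding tw_iso_def compose_mod_def using linear_funpow[OF f(1)] bij_betw_funpow[OF f(2)] by blast
qed

lemma funpow_coprime_generates:
  assumes "coprime i p" "g ^^ p = id"
  shows "\<exists>x. (g ^^ i) ^^ x = g ^^ k"
proof (cases "i = 0")
  case True
  then have "g = id" using assms by (simp add: coprime_0_left_iff)
  then show ?thesis by simp
next
  case False
  then obtain x y where "i * x = p * y + 1"
    using bezout_nat[of i p] assms(1) by (auto simp: coprime_iff_gcd_eq_1)
  then have "i * (x * k) = p * (y * k) + k"
    by (metis add_mult_distrib mult.assoc mult_1)
  then have "(g ^^ i) ^^ (x * k) = (g ^^ p) ^^ (y * k) \<circ> g ^^ k"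
    by (simp only: funpow_mult funpow_add)
  then show ?thesis using assms(2) by auto
qed

lemma stab_mod_range_funpow:
  assumes "tw_iso sM (compose_mod YM h) YM f" "\<And>k. \<exists>x. h ^^ x = g ^^ k"
  shows "stab_mod sM YM (range (\<lambda>k. g ^^ k)) = range (\<lambda>k. g ^^ k)"
proof -
  have "\<exists>f. tw_iso sM (compose_mod YM (g ^^ k)) YM f" for k
    using tw_iso_funpow[OF assms(1)] assms(2)[of k] by metis
  then show ?thesis unfolding stab_mod_def by blast
qed

theorem corollary5p8:
  fixes s :: "complex \<Rightarrow> 'v::ab_group_add \<Rightarrow> 'v"
    and Y :: "'v \<Rightarrow> int \<Rightarrow> 'v \<Rightarrow> 'v"
    and vac om :: 'v and c :: complex
    and g :: "'v \<Rightarrow> 'v" and p i :: nat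
    and sM :: "complex \<Rightarrow> 'm::ab_group_add \<Rightarrow> 'm"
    and YM :: "'v \<Rightarrow> rat \<Rightarrow> 'm \<Rightarrow> 'm"
  assumes "VOA s Y vac om c"
    and "simple_VOA s Y"
    and "VOA_aut s Y om g"
    and "prime p" and "g ^^ p = id" and "g \<noteq> id"
    and "1 \<le> i" and "i \<le> p - 1"
    and "tw_rational TYPE('m) s Y vac om (g ^^ i) p"
    and "irreducible_tw_module s Y vac om (g ^^ i) p sM YM"
  shows "stab_mod sM YM (range (\<lambda>k. g ^^ k)) = range (\<lambda>k. g ^^ k)
    \<and> (\<forall>\<phi>. Vector_Spaces.linear sM sM \<phi> \<and> bij \<phi>
           \<and> (\<forall>v n w. \<phi> (YM v n w) = YM (g v) n (\<phi> w))
         \<longrightarrow> (\<forall>a. {w. \<phi> w = sM a w} \<noteq> {0}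
               \<longrightarrow> irr_fixed_submodule sM YM {v. g v = v} {w. \<phi> w = sM a w}))"
proof -
  have p_pos: "p > 0" using \<open>prime p\<close> by (rule prime_gt_0_nat)
  have "\<not> p dvd i"
    using \<open>1 \<le> i\<close> \<open>i \<le> p - 1\<close> p_pos by (auto dest: dvd_imp_le)
  then have "coprime i p"
    using \<open>prime p\<close> prime_imp_coprime coprime_commute by blast
  have order: "(g ^^ i) ^^ p = id"
    using \<open>g ^^ p = id\<close> by (metis funpow_mult mult.commute id_funpow)
  have irreducible: "\<forall>W. module.subspace sM W \<and> (\<forall>u n. YM u n ` W \<subseteq> W) \<longrightarrow> W = {0} \<or> W = UNIV"
    and weak: "weak_tw_module s Y vac (g ^^ i) p sM YM"
    and L0_span: "module.span sM (\<Union>\<mu>. {w. LM0 om YM w = sM \<mu> w}) = UNIV"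
    using \<open>irreducible_tw_module s Y vac om (g ^^ i) p sM YM\<close>
    unfolding irreducible_tw_module_def tw_module_def by auto
  interpret VOA_twisted_module s Y vac om c "g ^^ i" p sM YM
    using \<open>VOA s Y vac om c\<close> VOA_aut_funpow[OF \<open>VOA_aut s Y om g\<close>] order p_pos weak
    by unfold_locales
  obtain f where "tw_iso sM (compose_mod YM (g ^^ i)) YM f"
    using tw_iso_compose_mod_twist L0_span by blast
  then have "stab_mod sM YM (range (\<lambda>k. g ^^ k)) = range (\<lambda>k. g ^^ k)"
    using stab_mod_range_funpow funpow_coprime_generates[OF \<open>coprime i p\<close> \<open>g ^^ p = id\<close>] by blast
  moreover have "Vector_Spaces.linear s s g"
    using \<open>VOA_aut s Y om g\<close> by (simp add: VOA_aut_def)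
  ultimately show ?thesis
    using eigenspace_irr_fixed_submodule[OF irreducible _ \<open>g ^^ p = id\<close> p_pos] bij_is_inj by blast
qed

end
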